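(* The relation $\{(\rho,\pi):\rho=[n]\text{ for some }n\ge1\text{ and }n\text{ is a part of }\pi\}$ is $\Pi_2$-definable in $\mathbf Y^*=\langle\mathcal P,\le,[1]+[1]\rangle$.
   Context: $\mathcal P$ is the set of all integer partitions, including the empty partition; a partition is a nonincreasing finite sequence of positive integers (its parts). $[n]$ denotes the partition with a single part $n$. Young's lattice $\mathbf Y=\langle\mathcal P,\le\rangle$ has $(s_1,\dots,s_r)\le(n_1,\dots,n_t)$ iff $r\le t$ and $s_i\le n_i$ for all $i\le r$; $\mathbf Y^*$ is $\mathbf Y$ with a constant symbol for the partition $[1]+[1]=(1,1)$. A relation is $\Pi_n$-definable if it is defined by a first-order formula in the language $\{\le,(1,1)\}$ in prenex form with $n$ alternating quantifier blocks, the outermost universal, and a quantifier-free matrix. *)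

theory Defs
  imports Main
begin

definition is_partition :: "nat list \<Rightarrow> bool" where
  "is_partition p \<longleftrightarrow> sorted_wrt (\<ge>) p \<and> (\<forall>x\<in>set p. 0 < x)"

definition young_le :: "nat list \<Rightarrow> nat list \<Rightarrow> bool" where
  "young_le s n \<longleftrightarrow> length s \<le> length n \<and> (\<forall>i<length s. s ! i \<le> n ! i)"

text \<open>The constant of Y*: the partition [1]+[1] = (1,1).\<close>
definition c11 :: "nat list" where
  "c11 = [1, 1]"

datatype tm = Var nat | Cst

datatype qf =
    TT
  | Le tm tm
  | Eq tm tm
  | Neg qf
  | Conj qf qf
  | Disj qf qf

fun tm_val :: "(nat \<Rightarrow> nat list) \<Rightarrow> tm \<Rightarrow> nat list" where
  "tm_val e (Var v) = e v"
| "tm_val e Cst = c11"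

fun qf_sat :: "(nat \<Rightarrow> nat list) \<Rightarrow> qf \<Rightarrow> bool" where
  "qf_sat e TT = True"
| "qf_sat e (Le s t) = young_le (tm_val e s) (tm_val e t)"
| "qf_sat e (Eq s t) = (tm_val e s = tm_val e t)"
| "qf_sat e (Neg f) = (\<not> qf_sat e f)"
| "qf_sat e (Conj f g) = (qf_sat e f \<and> qf_sat e g)"
| "qf_sat e (Disj f g) = (qf_sat e f \<or> qf_sat e g)"

text \<open>A prenex formula: a list of quantifier blocks (True = universal block,
  False = existential block), each block a list of variables, followed by a
  quantifier-free matrix.\<close>

fun block_sat :: "bool \<Rightarrow> nat list \<Rightarrow> ((nat \<Rightarrow> nat list) \<Rightarrow> bool) \<Rightarrow> (nat \<Rightarrow> nat list) \<Rightarrow> bool" where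
  "block_sat q [] P e = P e"
| "block_sat True (v # vs) P e = (\<forall>p. is_partition p \<longrightarrow> block_sat True vs P (e(v := p)))"
| "block_sat False (v # vs) P e = (\<exists>p. is_partition p \<and> block_sat False vs P (e(v := p)))"

fun prenex_sat :: "(bool \<times> nat list) list \<Rightarrow> qf \<Rightarrow> (nat \<Rightarrow> nat list) \<Rightarrow> bool" where
  "prenex_sat [] f e = qf_sat e f"
| "prenex_sat ((q, vs) # bs) f e = block_sat q vs (prenex_sat bs f) e"

text \<open>Prefix shape of a Pi_n formula: n alternating blocks, outermost universal.\<close>
definition pi_prefix :: "nat \<Rightarrow> (bool \<times> nat list) list \<Rightarrow> bool" where
  "pi_prefix n bs \<longleftrightarrow> length bs = n \<and> (\<forall>i<n. fst (bs ! i) = even i)"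

definition pi_definable2 :: "nat \<Rightarrow> (nat list \<Rightarrow> nat list \<Rightarrow> bool) \<Rightarrow> bool" where
  "pi_definable2 n R \<longleftrightarrow>
     (\<exists>bs f x y. pi_prefix n bs \<and> x \<noteq> y \<and>
        (\<forall>e. (\<forall>v. is_partition (e v)) \<longrightarrow> (R (e x) (e y) \<longleftrightarrow> prenex_sat bs f e)))"

definition single_part_rel :: "nat list \<Rightarrow> nat list \<Rightarrow> bool" where
  "single_part_rel \<rho> \<pi> \<longleftrightarrow> (\<exists>n\<ge>1. \<rho> = [n] \<and> n \<in> set \<pi>)"

end

theory Submission
  imports Defs
begin

text \<open>
  A partition \<open>\<rho>\<close> is a single row [n] with n \<ge> 1 iff \<open>(1,1) \<not>\<le> \<rho>\<close> and \<open>\<rho> \<noteq> []\<close>.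
  For such \<open>\<rho>\<close>, n is a part of \<open>\<pi>\<close> iff every ``probe'' (Q, S, Y, z) satisfies Q \<le> \<pi>, where
  a probe consists of a partition S with a greatest element Y strictly below it (so S is a
  k \<times> c rectangle and Y contains its first k - 1 rows), a single row z \<le> S longer than n
  (so c > n), and Q \<le> Y whose rows are at most n and with Y \<le> \<pi> \<squnion> Q.
  If n is a part of \<open>\<pi>\<close>, then Y \<le> \<pi> \<squnion> Q forces the first k - 1 parts of \<open>\<pi>\<close> to exceed n,
  hence k parts of \<open>\<pi>\<close> are at least n, and Q fits into that n^k block.
  If n is not a part and p parts of \<open>\<pi>\<close> exceed n, then Q = n^(p+1), S = (n+1)^(p+1),
  Y = ((n+1)^p, n), z = [n+1] is a probe with Q \<not>\<le> \<pi>.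
  Each clause of a probe is universal, so ``every probe satisfies Q \<le> \<pi>'' is \<Pi>_2.
\<close>

lemma is_partition_nth_pos: "is_partition z \<Longrightarrow> i < length z \<Longrightarrow> 0 < z ! i"
  unfolding is_partition_def by (auto simp: in_set_conv_nth)

lemma is_partition_nth_antimono: "is_partition z \<Longrightarrow> i \<le> j \<Longrightarrow> j < length z \<Longrightarrow> z ! j \<le> z ! i"
  unfolding is_partition_def by (metis le_neq_implies_less order_refl sorted_wrt_iff_nth_less)

lemma is_partitionI:
  "(\<And>i j. i < j \<Longrightarrow> j < length z \<Longrightarrow> z ! j \<le> z ! i) \<Longrightarrow> (\<And>i. i < length z \<Longrightarrow> 0 < z ! i)
    \<Longrightarrow> is_partition z"
  unfolding is_partition_def by (auto simp: sorted_wrt_iff_nth_less in_set_conv_nth)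

lemma is_partition_Nil: "is_partition []"
  by (simp add: is_partition_def)

lemma is_partition_replicate: "0 < c \<Longrightarrow> is_partition (replicate k c)"
  by (auto simp: is_partition_def sorted_wrt_iff_nth_less)

lemma is_partition_replicate_snoc:
  "0 < c \<Longrightarrow> c \<le> d \<Longrightarrow> is_partition (replicate k d @ [c])"
  by (auto intro!: is_partitionI simp: nth_append)

lemma young_le_Nil [simp]: "young_le [] z"
  by (simp add: young_le_def)

lemma young_le_Nil_iff [simp]: "young_le z [] \<longleftrightarrow> z = []"
  by (auto simp: young_le_def)

lemma young_le_antisym: "young_le a b \<Longrightarrow> young_le b a \<Longrightarrow> a = b"
  unfolding young_le_def by (auto intro!: nth_equalityI intro: order.antisym)

lemma young_le_trans: "young_le a b \<Longrightarrow> young_le b c \<Longrightarrow> young_le a c"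
  unfolding young_le_def by (meson dual_order.trans less_le_trans)

lemma young_le_replicate_iff:
  "young_le z (replicate k c) \<longleftrightarrow> length z \<le> k \<and> (\<forall>i<length z. z ! i \<le> c)"
  by (auto simp: young_le_def in_set_conv_nth)

lemma replicate_young_le_iff: "young_le (replicate k c) z \<longleftrightarrow> k \<le> length z \<and> (\<forall>i<k. c \<le> z ! i)"
  by (auto simp: young_le_def)

lemma c11_young_le_iff:
  assumes "is_partition z"
  shows "young_le c11 z \<longleftrightarrow> 2 \<le> length z"
proof
  assume "2 \<le> length z"
  with is_partition_nth_pos[OF assms] have "0 < z ! 0" "0 < z ! 1" by force+
  with \<open>2 \<le> length z\<close> show "young_le c11 z"
    by (auto simp: young_le_def c11_def less_Suc_eq)
qed (simp add: young_le_def c11_def)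

lemma single_row_iff:
  assumes "is_partition z"
  shows "\<not> young_le c11 z \<and> z \<noteq> [] \<longleftrightarrow> (\<exists>n\<ge>1. z = [n])"
  using assms is_partition_nth_pos[OF assms, of 0]
  by (cases z rule: remdups_adj.cases) (auto simp: c11_young_le_iff is_partition_def)

definition nth0 :: "nat list \<Rightarrow> nat \<Rightarrow> nat" where
  "nth0 xs i = (if i < length xs then xs ! i else 0)"

definition young_join :: "nat list \<Rightarrow> nat list \<Rightarrow> nat list" where
  "young_join a b = map (\<lambda>i. max (nth0 a i) (nth0 b i)) [0..<max (length a) (length b)]"

lemma is_partition_young_join:
  assumes "is_partition a" "is_partition b"
  shows "is_partition (young_join a b)"
proof (rule is_partitionI)
  have mono: "nth0 z j \<le> nth0 z i" if "is_partition z" "i \<le> j" for z i j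
    using that is_partition_nth_antimono unfolding nth0_def by auto
  show "young_join a b ! j \<le> young_join a b ! i" if "i < j" "j < length (young_join a b)" for i j
    using that assms mono[of a i j] mono[of b i j] by (auto simp: young_join_def le_max_iff_disj)
  show "0 < young_join a b ! i" if "i < length (young_join a b)" for i
    using that assms is_partition_nth_pos
    by (auto simp: young_join_def nth0_def less_max_iff_disj)
qed

lemma young_le_join1: "young_le a (young_join a b)"
  unfolding young_le_def young_join_def nth0_def by auto

lemma young_le_join2: "young_le b (young_join a b)"
  unfolding young_le_def young_join_def nth0_def by auto

lemma replicate_young_le_join_cancel:
  assumes "young_le (replicate k c) (young_join a b)" "\<forall>x\<in>set b. x < c" "0 < c"
  shows "young_le (replicate k c) a"
proof -
  have "i < length a \<and> c \<le> a ! i" if "i < k" for i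
  proof -
    from assms(1) that have "c \<le> max (nth0 a i) (nth0 b i)"
      by (auto simp: replicate_young_le_iff young_join_def)
    moreover have "nth0 b i < c"
      using assms(2,3) by (auto simp: nth0_def)
    ultimately have "c \<le> nth0 a i"
      by auto
    with \<open>0 < c\<close> show ?thesis
      by (auto simp: nth0_def split: if_splits)
  qed
  moreover from this[of "k - 1"] have "k \<le> length a"
    by (cases k) auto
  ultimately show ?thesis
    by (simp add: replicate_young_le_iff)
qed

definition greatest_strictly_below :: "nat list \<Rightarrow> nat list \<Rightarrow> bool" where
  "greatest_strictly_below Y S \<longleftrightarrow> young_le Y S \<and> Y \<noteq> S \<and>
     (\<forall>Z. is_partition Z \<longrightarrow> young_le Z S \<and> Z \<noteq> S \<longrightarrow> young_le Z Y)"

lemma greatest_strictly_below_butlast: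
  assumes "is_partition S" "S \<noteq> []" "greatest_strictly_below Y S"
  shows "young_le (butlast S) Y"
proof -
  have "is_partition (butlast S)"
    using assms(1) by (intro is_partitionI) (auto simp: nth_butlast is_partition_nth_antimono is_partition_nth_pos)
  moreover have "young_le (butlast S) S"
    by (auto simp: young_le_def nth_butlast)
  moreover have "length (butlast S) \<noteq> length S"
    using assms(2) by (cases S) simp_all
  then have "butlast S \<noteq> S"
    by metis
  ultimately show ?thesis
    using assms(3) by (auto simp: greatest_strictly_below_def)
qed

lemma greatest_strictly_below_rectangle:
  assumes S: "is_partition S" "S \<noteq> []" and Y: "greatest_strictly_below Y S"
  shows "S = replicate (length S) (last S)"
proof (rule ccontr)
  define R where "R = replicate (length S) (last S)"
  assume "S \<noteq> R"
  have "0 < last S"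
    using S is_partition_nth_pos[OF S(1), of "length S - 1"] by (simp add: last_conv_nth)
  then have "is_partition R"
    unfolding R_def by (rule is_partition_replicate)
  moreover have "young_le R S"
    using S by (auto simp: R_def young_le_def last_conv_nth intro: is_partition_nth_antimono)
  ultimately have "young_le R Y"
    using Y \<open>S \<noteq> R\<close> by (auto simp: greatest_strictly_below_def)
  moreover have "young_le (butlast S) Y"
    using greatest_strictly_below_butlast[OF S Y] .
  ultimately have "length S \<le> length Y" "\<forall>i<length S - 1. S ! i \<le> Y ! i" "last S \<le> Y ! (length S - 1)"
    using S(2) by (auto simp: young_le_def R_def nth_butlast)
  moreover have "S ! i \<le> Y ! i" if "i < length S" "\<forall>i<length S - 1. S ! i \<le> Y ! i"
      "last S \<le> Y ! (length S - 1)" for i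
    using that S(2) by (cases "i = length S - 1") (auto simp: last_conv_nth)
  ultimately have "young_le S Y"
    by (simp add: young_le_def)
  then show False
    using Y young_le_antisym by (auto simp: greatest_strictly_below_def)
qed

lemma greatest_strictly_below_rectangle_corner:
  "greatest_strictly_below (replicate k (Suc c) @ [c]) (replicate (Suc k) (Suc c))"
  unfolding greatest_strictly_below_def
proof (intro conjI allI impI; (elim conjE)?)
  let ?Y = "replicate k (Suc c) @ [c]" and ?S = "replicate (Suc k) (Suc c)"
  show "young_le ?Y ?S"
    by (auto simp: young_le_replicate_iff nth_append simp del: replicate_Suc)
  have "?Y ! k \<noteq> ?S ! k"
    by (simp add: nth_append del: replicate_Suc)
  then show "?Y \<noteq> ?S"
    by metis
  fix Z assume Z: "is_partition Z" "young_le Z ?S" "Z \<noteq> ?S"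
  then have len: "length Z \<le> Suc k" and bound: "\<forall>i<length Z. Z ! i \<le> Suc c"
    by (auto simp: young_le_replicate_iff simp del: replicate_Suc)
  have "Z ! k \<le> c" if "length Z = Suc k"
  proof (rule ccontr)
    assume "\<not> Z ! k \<le> c"
    then have "Z ! i = Suc c" if "i < Suc k" for i
      using bound that is_partition_nth_antimono[OF Z(1), of i k] \<open>length Z = Suc k\<close>
      by (fastforce intro: le_antisym)
    then have "Z = ?S"
      using \<open>length Z = Suc k\<close> by (simp add: nth_equalityI del: replicate_Suc)
    with Z(3) show False ..
  qed
  then have "Z ! i \<le> ?Y ! i" if "i < length Z" for i
    using that len bound by (cases "i < k") (auto simp: nth_append le_Suc_eq less_Suc_eq)
  with len show "young_le Z ?Y"
    by (simp add: young_le_def)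
qed

lemma young_le_singleton_iff: "young_le z [n] \<longleftrightarrow> z = [] \<or> (\<exists>m\<le>n. z = [m])"
  by (cases z rule: remdups_adj.cases) (auto simp: young_le_def)

lemma parts_bounded_if_rows_bounded:
  assumes "is_partition Q"
    and rows: "\<forall>Z. is_partition Z \<longrightarrow> young_le Z Q \<and> \<not> young_le c11 Z \<longrightarrow> young_le Z [n]"
  shows "\<forall>x\<in>set Q. x \<le> n"
proof (cases Q)
  case (Cons q Q')
  then have "is_partition [q]" "young_le [q] Q" "\<not> young_le c11 [q]"
    using assms(1) by (auto simp: is_partition_def young_le_def c11_def)
  with rows have "young_le [q] [n]"
    by blast
  then have "q \<le> n"
    by (simp add: young_le_def)
  moreover have "x \<le> q" if "x \<in> set Q" for x
    using that is_partition_nth_antimono[OF assms(1), of 0] Cons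
    by (auto simp: in_set_conv_nth) (metis Suc_mono nth_Cons_Suc zero_le)
  ultimately show ?thesis
    by fastforce
qed simp

lemma replicate_young_le_extend:
  assumes "is_partition \<pi>" "n \<in> set \<pi>" "young_le (replicate k (Suc n)) \<pi>"
  shows "young_le (replicate (Suc k) n) \<pi>"
proof -
  obtain j where j: "j < length \<pi>" "\<pi> ! j = n"
    using assms(2) by (auto simp: in_set_conv_nth)
  have "k \<le> j"
    using assms(3) j by (auto simp: replicate_young_le_iff not_le[symmetric])
  with j is_partition_nth_antimono[OF assms(1)] show ?thesis
    by (auto simp: replicate_young_le_iff simp del: replicate_Suc)
qed

definition part_probe ::
    "nat list \<Rightarrow> nat list \<Rightarrow> nat list \<Rightarrow> nat list \<Rightarrow> nat list \<Rightarrow> nat list \<Rightarrow> bool" where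
  "part_probe \<rho> \<pi> Q S Y z \<longleftrightarrow>
     young_le z S \<and> \<not> young_le c11 z \<and> \<not> young_le z \<rho> \<and>
     greatest_strictly_below Y S \<and> young_le Q Y \<and>
     (\<forall>Z. is_partition Z \<longrightarrow> young_le Z Q \<and> \<not> young_le c11 Z \<longrightarrow> young_le Z \<rho>) \<and>
     (\<forall>Z. is_partition Z \<longrightarrow> young_le \<pi> Z \<and> young_le Q Z \<longrightarrow> young_le Y Z)"

lemma part_probe_young_le:
  assumes parts: "is_partition \<pi>" "is_partition Q" "is_partition S" "is_partition z"
    and n: "n \<in> set \<pi>" and probe: "part_probe [n] \<pi> Q S Y z"
  shows "young_le Q \<pi>"
proof -
  from probe have zS: "young_le z S" and z_row: "\<not> young_le c11 z" and z_big: "\<not> young_le z [n]"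
    and below: "greatest_strictly_below Y S" and QY: "young_le Q Y"
    and Q_rows: "\<forall>Z. is_partition Z \<longrightarrow> young_le Z Q \<and> \<not> young_le c11 Z \<longrightarrow> young_le Z [n]"
    and Y_join: "\<forall>Z. is_partition Z \<longrightarrow> young_le \<pi> Z \<and> young_le Q Z \<longrightarrow> young_le Y Z"
    unfolding part_probe_def by blast+
  have "length z \<le> 1"
    using z_row c11_young_le_iff[OF parts(4)] by simp
  with z_big obtain m where "n < m" "z = [m]"
    by (cases z rule: remdups_adj.cases) (auto simp: young_le_singleton_iff)
  with zS have "S \<noteq> []" "m \<le> hd S"
    by (cases S; simp add: young_le_def)+
  define k c where "k = length S - 1" and "c = last S"
  have S: "S = replicate (Suc k) c"
    using greatest_strictly_below_rectangle[OF parts(3) \<open>S \<noteq> []\<close> below] \<open>S \<noteq> []\<close>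
    by (simp add: k_def c_def)
  with \<open>n < m\<close> \<open>m \<le> hd S\<close> have "Suc n \<le> c"
    by simp
  have Q_bounded: "\<forall>x\<in>set Q. x \<le> n"
    using parts_bounded_if_rows_bounded[OF parts(2) Q_rows] .
  have "young_le (replicate k c) Y"
    using greatest_strictly_below_butlast[OF parts(3) \<open>S \<noteq> []\<close> below] S
    by (simp add: butlast_conv_take del: replicate_Suc)
  moreover have "young_le Y (young_join \<pi> Q)"
    using Y_join is_partition_young_join[OF parts(1,2)] young_le_join1 young_le_join2 by blast
  ultimately have "young_le (replicate k c) (young_join \<pi> Q)"
    by (rule young_le_trans)
  moreover have "\<forall>x\<in>set Q. x < c" "0 < c"
    using Q_bounded \<open>Suc n \<le> c\<close> by fastforce+
  ultimately have "young_le (replicate k c) \<pi>"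
    by (rule replicate_young_le_join_cancel)
  moreover have "young_le (replicate k (Suc n)) (replicate k c)"
    using \<open>Suc n \<le> c\<close> by (simp add: young_le_replicate_iff)
  ultimately have "young_le (replicate k (Suc n)) \<pi>"
    using young_le_trans by blast
  then have "young_le (replicate (Suc k) n) \<pi>"
    by (rule replicate_young_le_extend[OF parts(1) n])
  moreover have "young_le Q S"
    using QY below young_le_trans[of Q Y S] by (simp add: greatest_strictly_below_def)
  then have "young_le Q (replicate (Suc k) n)"
    using Q_bounded S by (auto simp: young_le_replicate_iff young_le_def nth_mem simp del: replicate_Suc)
  ultimately show ?thesis
    using young_le_trans by blast
qed

lemma part_probe_counterexample:
  assumes "0 < n" "n \<notin> set \<pi>"
  obtains Q S Y z where "is_partition Q" "is_partition S" "is_partition Y" "is_partition z"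
    "part_probe [n] \<pi> Q S Y z" "\<not> young_le Q \<pi>"
proof -
  define p where "p = length (takeWhile (\<lambda>v. n < v) \<pi>)"
  let ?Q = "replicate (Suc p) n" and ?S = "replicate (Suc p) (Suc n)" and ?Y = "replicate p (Suc n) @ [n]"
  have large: "i < length \<pi> \<and> n < \<pi> ! i" if "i < p" for i
    using that unfolding p_def
    by (metis length_takeWhile_le nth_mem order_less_le_trans set_takeWhileD takeWhile_nth)
  have small: "\<pi> ! p < n" if "p < length \<pi>"
    using nth_length_takeWhile[OF that[unfolded p_def]] assms(2) nth_mem[OF that]
    unfolding p_def by (metis nat_neq_iff)
  have "young_le ?Y Z" if "young_le \<pi> Z" "young_le ?Q Z" for Z
  proof -
    have "Suc n \<le> Z ! i" if "i < p" for i
      using large[OF \<open>i < p\<close>] \<open>young_le \<pi> Z\<close> by (fastforce simp: young_le_def)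
    with \<open>young_le ?Q Z\<close> show ?thesis
      by (auto simp: young_le_def nth_append less_Suc_eq simp del: replicate_Suc)
  qed
  moreover have "young_le Z [n]" if "is_partition Z" "young_le Z ?Q" "\<not> young_le c11 Z" for Z
  proof -
    have "young_le Z (replicate 1 n)"
      using that c11_young_le_iff[OF that(1)] by (simp add: young_le_replicate_iff del: replicate_Suc)
    then show ?thesis
      by simp
  qed
  ultimately have "part_probe [n] \<pi> ?Q ?S ?Y [Suc n]"
    unfolding part_probe_def using greatest_strictly_below_rectangle_corner[of p n]
    by (auto simp: young_le_replicate_iff replicate_young_le_iff young_le_def c11_def nth_append
        simp del: replicate_Suc)
  moreover have "\<not> young_le ?Q \<pi>"
    using small by (auto simp: replicate_young_le_iff Suc_le_eq simp del: replicate_Suc)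
  moreover have "is_partition ?Q" "is_partition ?S" "is_partition ?Y"
    using assms(1) by (simp_all add: is_partition_replicate is_partition_replicate_snoc del: replicate_Suc)
  moreover have "is_partition [Suc n]"
    using is_partition_replicate[of "Suc n" 1] by simp
  ultimately show thesis
    using that by blast
qed

lemma single_part_rel_iff_part_probes:
  assumes "is_partition \<rho>" "is_partition \<pi>"
  shows "single_part_rel \<rho> \<pi> \<longleftrightarrow> \<not> young_le c11 \<rho> \<and> \<rho> \<noteq> [] \<and>
    (\<forall>Q S Y z. is_partition Q \<longrightarrow> is_partition S \<longrightarrow> is_partition Y \<longrightarrow> is_partition z \<longrightarrow>
       part_probe \<rho> \<pi> Q S Y z \<longrightarrow> young_le Q \<pi>)"
    (is "_ \<longleftrightarrow> ?row \<and> ?probes")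
proof
  assume "single_part_rel \<rho> \<pi>"
  then obtain n where "n \<ge> 1" "\<rho> = [n]" "n \<in> set \<pi>"
    by (auto simp: single_part_rel_def)
  then show "?row \<and> ?probes"
    using single_row_iff[OF assms(1)] part_probe_young_le[OF assms(2)] by blast
next
  assume "?row \<and> ?probes"
  then obtain n where n: "n \<ge> 1" "\<rho> = [n]" and probes: ?probes
    using single_row_iff[OF assms(1)] by blast
  show "single_part_rel \<rho> \<pi>"
  proof (rule ccontr)
    assume "\<not> single_part_rel \<rho> \<pi>"
    with n have "n \<notin> set \<pi>"
      by (auto simp: single_part_rel_def)
    moreover have "0 < n"
      using n(1) by simp
    ultimately obtain Q S Y z where "is_partition Q" "is_partition S" "is_partition Y" "is_partition z"
      "part_probe [n] \<pi> Q S Y z" "\<not> young_le Q \<pi>"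
      using part_probe_counterexample by blast
    with probes n(2) show False
      by blast
  qed
qed

lemma ex_partition_not_above_iff:
  "(\<exists>w. is_partition w \<and> P \<and> \<not> young_le \<rho> w \<and> R) \<longleftrightarrow> P \<and> \<rho> \<noteq> [] \<and> R"
  using is_partition_Nil by auto

lemma ex_partition_conj_const: "(\<exists>x. is_partition x \<and> P \<and> R x) \<longleftrightarrow> P \<and> (\<exists>x. is_partition x \<and> R x)"
  by auto

lemma all_partition_conj_const: "(\<forall>x. is_partition x \<longrightarrow> P \<and> R x) \<longleftrightarrow> P \<and> (\<forall>x. is_partition x \<longrightarrow> R x)"
  using is_partition_Nil by auto

text \<open>Variables: 0 = \<open>\<rho>\<close>, 1 = \<open>\<pi>\<close>; universally 2 = Q, 3 = S, 4 = Y, 5 = z;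
  existentially 6 = Z (refuting one of the universal clauses of a probe) and 7 = w (witnessing \<open>\<rho> \<noteq> []\<close>).\<close>
definition single_part_formula :: qf where
  "single_part_formula =
    Conj (Neg (Le Cst (Var 0)))
    (Conj (Neg (Le (Var 0) (Var 7)))
    (Disj (Neg (Le (Var 5) (Var 3)))
    (Disj (Le Cst (Var 5))
    (Disj (Le (Var 5) (Var 0))
    (Disj (Neg (Le (Var 4) (Var 3)))
    (Disj (Eq (Var 4) (Var 3))
    (Disj (Neg (Le (Var 2) (Var 4)))
    (Disj (Conj (Le (Var 6) (Var 3)) (Conj (Neg (Eq (Var 6) (Var 3))) (Neg (Le (Var 6) (Var 4)))))
    (Disj (Conj (Le (Var 6) (Var 2)) (Conj (Neg (Le Cst (Var 6))) (Neg (Le (Var 6) (Var 0)))))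
    (Disj (Conj (Le (Var 1) (Var 6)) (Conj (Le (Var 2) (Var 6)) (Neg (Le (Var 4) (Var 6)))))
    (Le (Var 2) (Var 1))))))))))))"

lemma ex_probe_violation_iff:
  "(\<exists>Z. is_partition Z \<and>
      (young_le Q Y \<longrightarrow> young_le Y S \<longrightarrow> young_le z S \<longrightarrow>
       young_le c11 z \<or> young_le z \<rho> \<or> Y = S \<or>
       young_le Z S \<and> Z \<noteq> S \<and> \<not> young_le Z Y \<or>
       young_le Z Q \<and> \<not> young_le c11 Z \<and> \<not> young_le Z \<rho> \<or>
       young_le \<pi> Z \<and> young_le Q Z \<and> \<not> young_le Y Z \<or>
       young_le Q \<pi>))
   \<longleftrightarrow> (part_probe \<rho> \<pi> Q S Y z \<longrightarrow> young_le Q \<pi>)"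
  using is_partition_Nil by (auto simp: part_probe_def greatest_strictly_below_def)

lemma prenex_sat_single_part_formula:
  "prenex_sat [(True, [2, 3, 4, 5]), (False, [6, 7])] single_part_formula e \<longleftrightarrow>
    \<not> young_le c11 (e 0) \<and> e 0 \<noteq> [] \<and>
    (\<forall>Q S Y z. is_partition Q \<longrightarrow> is_partition S \<longrightarrow> is_partition Y \<longrightarrow> is_partition z \<longrightarrow>
       part_probe (e 0) (e 1) Q S Y z \<longrightarrow> young_le Q (e 1))"
  by (simp add: single_part_formula_def ex_partition_not_above_iff ex_partition_conj_const
      all_partition_conj_const ex_probe_violation_iff del: ex_simps all_simps) blast

theorem proposition3p6:
  shows "pi_definable2 2 single_part_rel"
  unfolding pi_definable2_def
proof (intro exI conjI allI impI)
  show "pi_prefix 2 [(True, [2, 3, 4, 5]), (False, [6, 7])]"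
    by (auto simp: pi_prefix_def less_2_cases_iff)
  show "(0::nat) \<noteq> 1"
    by simp
  fix e :: "nat \<Rightarrow> nat list"
  assume "\<forall>v. is_partition (e v)"
  then show "single_part_rel (e 0) (e 1) \<longleftrightarrow>
      prenex_sat [(True, [2, 3, 4, 5]), (False, [6, 7])] single_part_formula e"
    unfolding prenex_sat_single_part_formula by (simp add: single_part_rel_iff_part_probes)
qed

end
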